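(* Assume that for each $k$ and each $x\in\mathrm{supp}(\hat{\mathsf p}_k)$ we have $\hat\pi_j(x)=0$ for all $j\neq k$ (in particular the $\hat{\mathsf p}_k$ have mutually disjoint supports), and let $\epsilon_k=D_{KL}(\hat{\mathsf p}_k\,\|\,\hat\pi_k)<\infty$. Consider any static gate in $\mathcal G_1$, i.e. $g(x,k)=w_k$ independent of $x$ (equivalently $w\in\Delta$), with model $\pi_w=\sum_kw_k\hat\pi_k$. Then $$\max_{k\in[1,p]}D_{KL}(\hat{\mathsf p}_k\,\|\,\pi_w)\ \ge\ \log\Big(\sum_{j=1}^pe^{\epsilon_j}\Big).$$
   Context: Fix an integer $p\ge 1$, $[1,p]=\{1,\dots,p\}$, $\Delta=\{\lambda\in\mathbb R^p:\lambda_k\ge 0,\ \sum_k\lambda_k=1\}$. Let $\hat{\mathsf p}_1,\dots,\hat{\mathsf p}_p$ be probability distributions with finite supports, $\mathcal X_0=\bigcup_k\mathrm{supp}(\hat{\mathsf p}_k)$, and $\hat\pi_1,\dots,\hat\pi_p$ probability distributions on $\mathcal X_0$. A gate is $g:\mathcal X_0\times[1,p]\to[0,1]$ with $\sum_kg(x,k)=1$ for each $x$; $\pi_g(x)=\sum_kg(x,k)\hat\pi_k(x)$, $Z_g=\sum_{x\in\mathcal X_0}\pi_g(x)$, $\mathcal G_1=\{g:Z_g=1\}$. $D_{KL}(P\|Q)=\sum_xP(x)\log\frac{P(x)}{Q(x)}\in[0,\infty]$ with conventions $0\log\frac0q=0$, $a\log\frac a0=+\infty$ for $a>0$. *)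

theory Defs
  imports "HOL-Analysis.Analysis"
begin

definition supp :: "('a \<Rightarrow> real) \<Rightarrow> 'a set" where
  "supp P = {x. P x \<noteq> 0}"

definition fin_dist :: "('a \<Rightarrow> real) \<Rightarrow> bool" where
  "fin_dist P \<longleftrightarrow> (\<forall>x. 0 \<le> P x) \<and> finite (supp P) \<and> (\<Sum>x\<in>supp P. P x) = 1"

text \<open>Kullback--Leibler divergence (natural log) with the conventions
  0 log (0/q) = 0 and a log (a/0) = +infinity for a > 0; the sum ranges over the
  support of P (the remaining terms vanish).\<close>
definition KL :: "('a \<Rightarrow> real) \<Rightarrow> ('a \<Rightarrow> real) \<Rightarrow> ereal" where
  "KL P Q = (if \<exists>x\<in>supp P. Q x = 0 then \<infinity>
             else ereal (\<Sum>x\<in>supp P. P x * ln (P x / Q x)))"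

end

theory Submission
  imports Defs
begin

text \<open>Under the separation hypothesis the static mixture \<open>\<pi>\<^sub>w\<close> coincides with
  \<open>w\<^sub>k \<hat>\<pi>\<^sub>k\<close> on the support of \<open>\<hat>p\<^sub>k\<close>, and rescaling the second argument of a
  KL divergence by \<open>c\<close> shifts it by \<open>-log c\<close>.  Hence
  \<open>D(\<hat>p\<^sub>k \<parallel> \<pi>\<^sub>w) = \<epsilon>\<^sub>k - log w\<^sub>k\<close> (infinite if \<open>w\<^sub>k = 0\<close>).  With \<open>S = \<Sum>\<^sub>j e^\<epsilon>\<^sub>j\<close>, the
  weights \<open>w\<^sub>k\<close> and \<open>e^\<epsilon>\<^sub>k / S\<close> both sum to 1, so some \<open>k\<close> has \<open>w\<^sub>k \<le> e^\<epsilon>\<^sub>k / S\<close>,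
  i.e. \<open>\<epsilon>\<^sub>k - log w\<^sub>k \<ge> log S\<close>.\<close>

lemma KL_cong_supp:
  assumes "\<And>x. x \<in> supp P \<Longrightarrow> Q x = Q' x"
  shows "KL P Q = KL P Q'"
  using assms unfolding KL_def by simp

lemma KL_zero_right:
  assumes "fin_dist P"
  shows "KL P (\<lambda>x. 0) = \<infinity>"
proof -
  have "supp P \<noteq> {}"
    using assms unfolding fin_dist_def by auto
  then show ?thesis
    unfolding KL_def by auto
qed

text \<open>No sign condition on \<open>Q\<close> or \<open>c\<close> is needed, since Isabelle's \<open>ln\<close> satisfies
  \<open>ln x = ln \<bar>x\<bar>\<close>.\<close>

lemma KL_scale_right:
  fixes c :: real
  assumes "fin_dist P" and "c \<noteq> 0"
  shows "KL P (\<lambda>x. c * Q x) = KL P Q - ereal (ln c)"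
proof (cases "\<exists>x\<in>supp P. Q x = 0")
  case True
  then show ?thesis unfolding KL_def by auto
next
  case False
  have mass: "(\<Sum>x\<in>supp P. P x) = 1"
    using assms(1) unfolding fin_dist_def by blast
  have "(\<Sum>x\<in>supp P. P x * ln (P x / (c * Q x)))
      = (\<Sum>x\<in>supp P. P x * ln (P x / Q x) - P x * ln c)"
  proof (rule sum.cong [OF refl])
    fix x assume "x \<in> supp P"
    with False assms(2) have "P x \<noteq> 0" "Q x \<noteq> 0"
      unfolding supp_def by auto
    with assms(2) show "P x * ln (P x / (c * Q x)) = P x * ln (P x / Q x) - P x * ln c"
      by (simp add: ln_div ln_mult algebra_simps)
  qed
  also have "\<dots> = (\<Sum>x\<in>supp P. P x * ln (P x / Q x)) - ln c"
    by (simp add: sum_subtractf sum_distrib_right [symmetric] mass)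
  finally show ?thesis
    using False assms(2) unfolding KL_def by simp
qed

lemma KL_separated_mixture:
  fixes w :: "'i \<Rightarrow> real"
  assumes "finite I" and "k \<in> I" and "fin_dist P"
    and separated: "\<And>x j. x \<in> supp P \<Longrightarrow> j \<in> I \<Longrightarrow> j \<noteq> k \<Longrightarrow> q j x = 0"
  shows "KL P (\<lambda>x. \<Sum>j\<in>I. w j * q j x)
           = (if w k = 0 then \<infinity> else KL P (q k) - ereal (ln (w k)))"
proof -
  have "(\<Sum>j\<in>I. w j * q j x) = w k * q k x" if "x \<in> supp P" for x
    using assms(1,2) separated [OF that] by (simp add: sum.remove)
  then have "KL P (\<lambda>x. \<Sum>j\<in>I. w j * q j x) = KL P (\<lambda>x. w k * q k x)"
    by (rule KL_cong_supp)
  then show ?thesis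
    using KL_zero_right [OF assms(3)] KL_scale_right [OF assms(3)] by auto
qed

lemma ex_le_if_sum_le:
  fixes f g :: "'i \<Rightarrow> real"
  assumes "finite A" and "A \<noteq> {}" and "sum f A \<le> sum g A"
  shows "\<exists>k\<in>A. f k \<le> g k"
  using sum_strict_mono [OF assms(1,2), of g f] assms(3) by force

theorem mainTheorem4:
  fixes p :: nat
    and ph :: "nat \<Rightarrow> 'a \<Rightarrow> real"
    and pih :: "nat \<Rightarrow> 'a \<Rightarrow> real"
    and eps :: "nat \<Rightarrow> real"
    and w :: "nat \<Rightarrow> real"
  assumes p_pos: "1 \<le> p"
    and ph_dist: "\<forall>k\<in>{1..p}. fin_dist (ph k)"
    and pih_dist: "\<forall>k\<in>{1..p}. fin_dist (pih k) \<and> supp (pih k) \<subseteq> (\<Union>j\<in>{1..p}. supp (ph j))"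
    and sep: "\<forall>k\<in>{1..p}. \<forall>x\<in>supp (ph k). \<forall>j\<in>{1..p}. j \<noteq> k \<longrightarrow> pih j x = 0"
    and eps_def: "\<forall>k\<in>{1..p}. KL (ph k) (pih k) = ereal (eps k)"
    and w_nonneg: "\<forall>k\<in>{1..p}. 0 \<le> w k"
    and w_sum: "(\<Sum>k=1..p. w k) = 1"
  shows "Max ((\<lambda>k. KL (ph k) (\<lambda>x. \<Sum>j=1..p. w j * pih j x)) ` {1..p})
           \<ge> ereal (ln (\<Sum>j=1..p. exp (eps j)))"
proof -
  define S where "S = (\<Sum>j=1..p. exp (eps j))"
  have "S > 0"
    unfolding S_def using p_pos by (intro sum_pos) auto
  have weights: "(\<Sum>k=1..p. w k * S) \<le> (\<Sum>k=1..p. exp (eps k))"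
    using w_sum by (simp add: S_def sum_distrib_right [symmetric])
  obtain k where k: "k \<in> {1..p}" and "w k * S \<le> exp (eps k)"
    using ex_le_if_sum_le [OF _ _ weights] p_pos by auto
  have bound: "ln S \<le> eps k - ln (w k)" if "w k > 0"
  proof -
    have "ln (w k * S) \<le> ln (exp (eps k))"
      using that \<open>S > 0\<close> \<open>w k * S \<le> exp (eps k)\<close> by (intro ln_mono) auto
    then show ?thesis
      using that \<open>S > 0\<close> by (simp add: ln_mult_pos)
  qed
  have mixture: "KL (ph k) (\<lambda>x. \<Sum>j=1..p. w j * pih j x)
      = (if w k = 0 then \<infinity> else ereal (eps k) - ereal (ln (w k)))"
    using KL_separated_mixture [of "{1..p}" k "ph k" pih w] k ph_dist sep eps_def by auto
  have "ereal (ln S) \<le> KL (ph k) (\<lambda>x. \<Sum>j=1..p. w j * pih j x)"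
  proof (cases "w k = 0")
    case False
    then have "w k > 0"
      using k w_nonneg by (simp add: order_less_le)
    then show ?thesis
      using mixture bound by simp
  qed (use mixture in simp)
  also have "\<dots> \<le> Max ((\<lambda>k. KL (ph k) (\<lambda>x. \<Sum>j=1..p. w j * pih j x)) ` {1..p})"
    using k by (intro Max_ge) auto
  finally show ?thesis
    unfolding S_def .
qed

end
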